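(* Let $X,X_1,X_2,\dots$ be i.i.d. real random variables with $EX=0$ and $E|X|^{2+\varepsilon}<\infty$ for some $\varepsilon>0$. Let $\mu>0$, $m\ge1$, $\delta\in(0,1/2]$ and $\alpha$ satisfy $2<\alpha\le(2+\varepsilon)(1-\delta)$, and assume $$\frac{6\cdot 2^{\alpha}}{(\alpha-1)(m+1)^{\alpha-1}\mu}\,E\big[(X^+)^{2+\varepsilon}\big]\le1.$$ Let $n_k=2^{k-1}$ for $k\ge1$, $\bar G(t)=\int_t^\infty (1+s)^{-\alpha}\,ds$, and $$g(k)=\frac{\bar G(m+\mu n_{k-1})-\bar G(m+\mu n_k)}{\bar G(m+\mu n_1)},\qquad k\ge2,$$ and $A_k=\bigcup_{j=n_{k-1}}^{n_k-1}\{X_j>(\mu j+m)^{1-\delta}\}$. Then $$\frac{3P(A_k)}{g(k)}\le1\qquad\text{for all }k\ge2.$$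
   Context: $X^+=\max(X,0)$. $g$ is a probability mass function on $\{2,3,\dots\}$ (it is the law of the dyadic block containing a level associated with a Pareto random variable $Y$ with $P(Y>y)=(1+y)^{-\alpha}$, $y\ge0$). *)

theory Defs
  imports "HOL-Probability.Probability"
begin

definition Gbar :: "real \<Rightarrow> real \<Rightarrow> real" where
  "Gbar \<alpha> t = (LBINT s:{t..}. (1 + s) powr (-\<alpha>))"

definition nk :: "nat \<Rightarrow> nat" where
  "nk k = 2 ^ (k - 1)"

definition gblock :: "real \<Rightarrow> real \<Rightarrow> real \<Rightarrow> nat \<Rightarrow> real" where
  "gblock \<alpha> m \<mu> k =
     (Gbar \<alpha> (m + \<mu> * real (nk (k - 1))) - Gbar \<alpha> (m + \<mu> * real (nk k)))
       / Gbar \<alpha> (m + \<mu> * real (nk 1))"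

definition Ablock :: "'a measure \<Rightarrow> (nat \<Rightarrow> 'a \<Rightarrow> real) \<Rightarrow> real \<Rightarrow> real \<Rightarrow> real \<Rightarrow> nat \<Rightarrow> 'a set" where
  "Ablock M X \<mu> m \<delta> k =
     (\<Union>j\<in>{nk (k - 1) .. nk k - 1}. {\<omega> \<in> space M. X j \<omega> > (\<mu> * real j + m) powr (1 - \<delta>)})"

end

theory Submission
  imports Defs "HOL-Real_Asymp.Real_Asymp"
begin

(*
  By the union bound and Markov's
  inequality for the (2+eps)-th moment of the positive part, each of the n_{k-1} events
  making up A_k has probability at most E[(X^+)^(2+eps)] / (m + mu n_{k-1})^alpha, since
  (2+eps)(1-delta) >= alpha. On the other side Gbar(t) = (1+t)^(1-alpha)/(alpha-1), and the
  mean value theorem bounds the increment of Gbar over [m + mu n_{k-1}, m + 2 mu n_{k-1}]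
  from below by mu n_{k-1} (1 + m + 2 mu n_{k-1})^(-alpha) >= mu n_{k-1} 2^(-alpha)
  (m + mu n_{k-1})^(-alpha), using m >= 1. The moment hypothesis is exactly what makes the
  two bounds meet.
*)

lemma nk_ge_1: "nk k \<ge> 1"
  by (simp add: nk_def)

lemma nk_eq_double_pred:
  assumes "k \<ge> 2"
  shows "nk k = 2 * nk (k - 1)"
proof -
  obtain q where "k = Suc (Suc q)"
    using assms by (metis add_2_eq_Suc le_Suc_ex)
  then show ?thesis
    by (simp add: nk_def)
qed

lemma has_integral_shifted_powr_tail:
  fixes t a :: real
  assumes "a > 1" "t > -1"
  shows "((\<lambda>s. (1 + s) powr (-a)) has_integral (1 + t) powr (1 - a) / (a - 1)) {t..}"
proof (rule has_integral_to_inf)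
  define F where "F \<equiv> \<lambda>x::real. (1 + x) powr (1 - a) / (1 - a)"
  have FTC: "((\<lambda>s. (1 + s) powr (-a)) has_integral (F y - F t)) {t..y}" if "y \<ge> t" for y
  proof (intro fundamental_theorem_of_calculus that)
    fix x assume x: "x \<in> {t..y}"
    have "((\<lambda>x. (1 + x) powr (1 - a) / (1 - a)) has_real_derivative
            ((1 - a) * (1 + x) powr (1 - a - 1) * (0 + 1)) / (1 - a)) (at x)"
      using x assms by (intro derivative_eq_intros) auto
    moreover have "((1 - a) * (1 + x) powr (1 - a - 1) * (0 + 1)) / (1 - a) = (1 + x) powr (-a)"
      using assms by simp
    ultimately show "(F has_vector_derivative (1 + x) powr (-a)) (at x within {t..y})"
      unfolding F_def
      by (metis has_field_derivative_at_within has_real_derivative_iff_has_vector_derivative)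
  qed
  then show "(\<lambda>s. (1 + s) powr (-a)) integrable_on {t..y}" for y
    by (cases "y \<ge> t") (auto simp: integrable_on_def)
  have "\<forall>\<^sub>F y in at_top. integral {t..y} (\<lambda>s. (1 + s) powr (-a)) = F y - F t"
    using FTC by (meson eventually_at_top_linorderI integral_unique)
  moreover have "((\<lambda>y::real. F y - F t) \<longlongrightarrow> - F t) at_top"
    using assms unfolding F_def by real_asymp
  moreover have "- F t = (1 + t) powr (1 - a) / (a - 1)"
    unfolding F_def using assms by (simp add: divide_simps algebra_simps)
  ultimately show "((\<lambda>y. integral {t..y} (\<lambda>s. (1 + s) powr (-a)))
                      \<longlongrightarrow> (1 + t) powr (1 - a) / (a - 1)) at_top"
    by (simp add: tendsto_cong)
qed auto

lemma Gbar_eq: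
  assumes "a > 1" "t > -1"
  shows "Gbar a t = (1 + t) powr (1 - a) / (a - 1)"
proof -
  note tail = has_integral_shifted_powr_tail[OF assms]
  have "(\<lambda>s. (1 + s) powr (-a)) absolutely_integrable_on {t..}"
    by (rule nonnegative_absolutely_integrable_1) (use tail in \<open>auto simp: integrable_on_def\<close>)
  moreover have "(\<lambda>x. indicator {t..} x *\<^sub>R (1 + x) powr (-a)) \<in> borel_measurable lborel"
    by measurable
  ultimately have "set_integrable lborel {t..} (\<lambda>s. (1 + s) powr (-a))"
    unfolding set_integrable_def by (simp add: integrable_completion)
  then have "Gbar a t = integral {t..} (\<lambda>s. (1 + s) powr (-a))"
    unfolding Gbar_def by (rule set_borel_integral_eq_integral)
  then show ?thesis
    using tail integral_unique by metis
qed

lemma powr_diff_ge_mean_value: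
  fixes u v a :: real
  assumes "0 < u" "u < v" "a > 1"
  shows "u powr (1 - a) - v powr (1 - a) \<ge> (a - 1) * (v - u) / v powr a"
proof -
  have "\<And>x. u \<le> x \<Longrightarrow> x \<le> v \<Longrightarrow> DERIV (\<lambda>x. x powr (1 - a)) x :> (1 - a) * x powr (1 - a - 1)"
    using assms by (intro has_real_derivative_powr) auto
  from MVT2[OF assms(2) this] obtain z where z: "u < z" "z < v"
    and MVT: "v powr (1 - a) - u powr (1 - a) = (v - u) * ((1 - a) * z powr (1 - a - 1))"
    by blast
  define w where "w = 1 / z powr a"
  have "z powr (1 - a - 1) = w"
    unfolding w_def using z assms by (simp add: powr_minus_divide)
  with MVT have eq: "u powr (1 - a) - v powr (1 - a) = (a - 1) * (v - u) * w"
    by (simp add: algebra_simps)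
  have "z powr a \<le> v powr a"
    using z assms by (intro powr_mono2) auto
  then have "1 / v powr a \<le> 1 / z powr a"
    using z assms by (intro divide_left_mono) auto
  then have "(a - 1) * (v - u) * (1 / v powr a) \<le> (a - 1) * (v - u) * w"
    unfolding w_def using assms by (intro mult_left_mono) auto
  then show ?thesis
    using eq by simp
qed

lemma gblock_eq:
  assumes "\<alpha> > 1" "\<mu> \<ge> 0" "m > -1" "k \<ge> 2"
  defines "a \<equiv> real (nk (k - 1))"
  shows "gblock \<alpha> m \<mu> k =
           ((1 + m + \<mu> * a) powr (1 - \<alpha>) - (1 + m + \<mu> * (2 * a)) powr (1 - \<alpha>))
             / (1 + m + \<mu>) powr (1 - \<alpha>)"
proof -
  have G: "Gbar \<alpha> (m + \<mu> * b) = (1 + m + \<mu> * b) powr (1 - \<alpha>) / (\<alpha> - 1)" if "b \<ge> 0" for b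
  proof -
    have "m + \<mu> * b > -1"
      using assms(2,3) that by (smt (verit) mult_nonneg_nonneg)
    then show ?thesis
      using Gbar_eq[OF assms(1), of "m + \<mu> * b"] by (simp add: add.assoc)
  qed
  have "nk 1 = 1"
    by (simp add: nk_def)
  then show ?thesis
    unfolding gblock_def nk_eq_double_pred[OF assms(4)] a_def
    using G[of "real (nk (k - 1))"] G[of "2 * real (nk (k - 1))"] G[of 1] assms(1)
    by (simp add: diff_divide_distrib[symmetric])
qed

lemma gblock_lower_bound:
  assumes "\<alpha> > 1" "\<mu> > 0" "m \<ge> 1" "k \<ge> 2"
  defines "a \<equiv> real (nk (k - 1))"
  shows "(\<alpha> - 1) * \<mu> * a * (m + 1) powr (\<alpha> - 1) / (2 powr \<alpha> * (m + \<mu> * a) powr \<alpha>)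
           \<le> gblock \<alpha> m \<mu> k"
proof -
  define u v W where "u = 1 + m + \<mu> * a" and "v = 1 + m + \<mu> * (2 * a)" and "W = 1 + m + \<mu>"
  define N where "N = (\<alpha> - 1) * (\<mu> * a) / (2 powr \<alpha> * (m + \<mu> * a) powr \<alpha>)"
  have a1: "a \<ge> 1"
    unfolding a_def using nk_ge_1 by simp
  have ma: "m + \<mu> * a > 0"
    using assms(2,3) a1 by (smt (verit) mult_nonneg_nonneg)
  have uv: "0 < u" "u < v"
    unfolding u_def v_def using ma assms(2) a1 by auto
  have "v \<le> 2 * (m + \<mu> * a)"
    unfolding v_def using assms(3) by simp
  then have "v powr \<alpha> \<le> (2 * (m + \<mu> * a)) powr \<alpha>"
    using uv assms(1) by (intro powr_mono2) auto
  also have "\<dots> = 2 powr \<alpha> * (m + \<mu> * a) powr \<alpha>"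
    using ma by (subst powr_mult) auto
  finally have "N \<le> (\<alpha> - 1) * (\<mu> * a) / v powr \<alpha>"
    unfolding N_def using uv ma assms(1,2) a1 by (intro divide_left_mono) auto
  also have "\<dots> \<le> u powr (1 - \<alpha>) - v powr (1 - \<alpha>)"
    using powr_diff_ge_mean_value[OF uv assms(1)] by (simp add: u_def v_def)
  finally have numerator: "N \<le> u powr (1 - \<alpha>) - v powr (1 - \<alpha>)" .
  have N_pos: "N > 0"
    unfolding N_def using assms(1,2) a1 ma by simp
  have W_pos: "W > 0"
    unfolding W_def using assms(2,3) by simp
  have "(m + 1) powr (\<alpha> - 1) \<le> W powr (\<alpha> - 1)"
    unfolding W_def using assms by (intro powr_mono2) auto
  then have "1 / W powr (\<alpha> - 1) \<le> 1 / (m + 1) powr (\<alpha> - 1)"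
    using assms(3) W_pos by (intro divide_left_mono) auto
  then have denominator: "W powr (1 - \<alpha>) \<le> 1 / (m + 1) powr (\<alpha> - 1)" "W powr (1 - \<alpha>) > 0"
    using W_pos by (auto simp: powr_minus_divide[of W "\<alpha> - 1", simplified])
  have "(\<alpha> - 1) * \<mu> * a * (m + 1) powr (\<alpha> - 1) / (2 powr \<alpha> * (m + \<mu> * a) powr \<alpha>)
          = N / (1 / (m + 1) powr (\<alpha> - 1))"
    unfolding N_def by simp
  also have "\<dots> \<le> N / W powr (1 - \<alpha>)"
    using denominator N_pos assms(3) by (intro divide_left_mono) auto
  also have "\<dots> \<le> (u powr (1 - \<alpha>) - v powr (1 - \<alpha>)) / W powr (1 - \<alpha>)"
    using numerator denominator by (intro divide_right_mono) auto
  also have "\<dots> = gblock \<alpha> m \<mu> k"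
    using gblock_eq[OF assms(1) _ _ assms(4)] assms(2,3)
    unfolding u_def v_def W_def a_def by simp
  finally show ?thesis .
qed

lemma integrable_max_0_powr:
  fixes f :: "'a \<Rightarrow> real"
  assumes "integrable M (\<lambda>\<omega>. \<bar>f \<omega>\<bar> powr p)" "f \<in> borel_measurable M" "p \<ge> 0"
  shows "integrable M (\<lambda>\<omega>. max (f \<omega>) 0 powr p)"
proof (rule Bochner_Integration.integrable_bound[OF assms(1)])
  show "(\<lambda>\<omega>. max (f \<omega>) 0 powr p) \<in> borel_measurable M"
    using assms(2) by measurable
  show "AE \<omega> in M. norm (max (f \<omega>) 0 powr p) \<le> norm (\<bar>f \<omega>\<bar> powr p)"
    using assms(3) by (intro AE_I2) (auto intro!: powr_mono2)
qed

lemma (in prob_space) prob_gt_le_pos_moment: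
  fixes Y :: "'a \<Rightarrow> real"
  assumes [measurable]: "Y \<in> borel_measurable M"
    and "integrable M (\<lambda>\<omega>. max (Y \<omega>) 0 powr p)" "p > 0" "t > 0"
  shows "prob {\<omega>\<in>space M. Y \<omega> > t} \<le> (\<integral>\<omega>. max (Y \<omega>) 0 powr p \<partial>M) / t powr p"
proof -
  have "prob {\<omega>\<in>space M. Y \<omega> > t} \<le> prob {\<omega>\<in>space M. max (Y \<omega>) 0 powr p \<ge> t powr p}"
    using assms(3,4) by (intro finite_measure_mono) (auto intro!: powr_mono2)
  also have "\<dots> \<le> (\<integral>\<omega>. max (Y \<omega>) 0 powr p \<partial>M) / t powr p"
    by (rule integral_Markov_inequality_measure[OF assms(2), of "space M"]) (use assms in auto)
  finally show ?thesis .
qed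

lemma measure_gt_eq_of_distr_eq:
  fixes X Y :: "'a \<Rightarrow> real"
  assumes "X \<in> borel_measurable M" "Y \<in> borel_measurable M"
    and "distr M borel X = distr M borel Y"
  shows "measure M {\<omega>\<in>space M. X \<omega> > t} = measure M {\<omega>\<in>space M. Y \<omega> > t}"
proof -
  have "measure M {\<omega>\<in>space M. Z \<omega> > t} = measure (distr M borel Z) {t<..}"
    if "Z \<in> borel_measurable M" for Z :: "'a \<Rightarrow> real"
    using that by (subst measure_distr) (auto intro!: arg_cong[where f = "measure M"])
  then show ?thesis
    using assms by metis
qed

lemma (in prob_space) prob_Ablock_le:
  fixes X :: "nat \<Rightarrow> 'a \<Rightarrow> real"
  assumes [measurable]: "\<And>j. X j \<in> borel_measurable M"
    and ident: "\<And>j. distr M borel (X j) = distr M borel (X 0)"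
    and moment: "integrable M (\<lambda>\<omega>. max (X 0 \<omega>) 0 powr p)"
    and "p > 0" "\<mu> \<ge> 0" "m \<ge> 1" "0 \<le> \<alpha>" "\<alpha> \<le> p * (1 - \<delta>)" "k \<ge> 2"
  defines "a \<equiv> nk (k - 1)"
  shows "prob (Ablock M X \<mu> m \<delta> k)
           \<le> real a * (\<integral>\<omega>. max (X 0 \<omega>) 0 powr p \<partial>M) / (m + \<mu> * real a) powr \<alpha>"
proof -
  define E where "E = (\<integral>\<omega>. max (X 0 \<omega>) 0 powr p \<partial>M)"
  define D where "D = (m + \<mu> * real a) powr \<alpha>"
  have E_nonneg: "E \<ge> 0"
    unfolding E_def by (intro integral_nonneg_AE) auto
  have D_pos: "D > 0"
    unfolding D_def using assms(5,6) by (smt (verit) mult_nonneg_nonneg of_nat_0_le_iff powr_gt_zero)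
  have single: "prob {\<omega>\<in>space M. X j \<omega> > (\<mu> * real j + m) powr (1 - \<delta>)} \<le> E / D"
    if j: "j \<in> {a..2 * a - 1}" for j
  proof -
    define b where "b = \<mu> * real j + m"
    have b1: "b \<ge> 1"
      unfolding b_def using assms(5,6) by (simp add: add_increasing)
    have "prob {\<omega>\<in>space M. X j \<omega> > b powr (1 - \<delta>)} = prob {\<omega>\<in>space M. X 0 \<omega> > b powr (1 - \<delta>)}"
      using ident by (intro measure_gt_eq_of_distr_eq) auto
    also have "\<dots> \<le> E / (b powr (1 - \<delta>)) powr p"
      unfolding E_def using b1 assms(4) by (intro prob_gt_le_pos_moment moment) auto
    also have "(b powr (1 - \<delta>)) powr p = b powr (p * (1 - \<delta>))"
      by (simp add: powr_powr mult_ac)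
    also have "E / \<dots> \<le> E / D"
    proof (rule divide_left_mono[OF _ E_nonneg])
      have "D \<le> b powr \<alpha>"
        unfolding D_def b_def using j assms(5-7)
        by (intro powr_mono2) (auto simp: add.commute intro!: add_nonneg_nonneg mult_left_mono)
      also have "\<dots> \<le> b powr (p * (1 - \<delta>))"
        using b1 assms(8) by (intro powr_mono) auto
      finally show "D \<le> b powr (p * (1 - \<delta>))" .
      show "0 < b powr (p * (1 - \<delta>)) * D"
        using b1 D_pos by simp
    qed
    finally show ?thesis
      unfolding b_def .
  qed
  have "prob (Ablock M X \<mu> m \<delta> k)
          \<le> (\<Sum>j\<in>{a..2 * a - 1}. prob {\<omega>\<in>space M. X j \<omega> > (\<mu> * real j + m) powr (1 - \<delta>)})"
    unfolding Ablock_def nk_eq_double_pred[OF assms(9)] a_def[symmetric]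
    by (intro measure_UNION_le) (simp, measurable)
  also have "\<dots> \<le> (\<Sum>j\<in>{a..2 * a - 1}. E / D)"
    by (intro sum_mono single)
  also have "\<dots> = real a * E / D"
    using nk_ge_1[of "k - 1"] unfolding a_def by simp
  finally show ?thesis
    unfolding E_def D_def .
qed

theorem lemma1:
  fixes M :: "'a measure" and X :: "nat \<Rightarrow> 'a \<Rightarrow> real"
    and \<epsilon> \<mu> m \<delta> \<alpha> :: real
  assumes "prob_space M"
    and indep: "prob_space.indep_vars M (\<lambda>_. borel) X UNIV"
    and ident: "\<And>i. distr M borel (X i) = distr M borel (X 0)"
    and int: "integrable M (X 0)"
    and mean0: "(\<integral>\<omega>. X 0 \<omega> \<partial>M) = 0"
    and eps: "\<epsilon> > 0"
    and mom: "integrable M (\<lambda>\<omega>. \<bar>X 0 \<omega>\<bar> powr (2 + \<epsilon>))"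
    and mu: "\<mu> > 0" and m: "m \<ge> 1"
    and delta: "0 < \<delta>" "\<delta> \<le> 1/2"
    and alpha: "2 < \<alpha>" "\<alpha> \<le> (2 + \<epsilon>) * (1 - \<delta>)"
    and cond: "6 * 2 powr \<alpha> / ((\<alpha> - 1) * (m + 1) powr (\<alpha> - 1) * \<mu>)
                 * (\<integral>\<omega>. (max (X 0 \<omega>) 0) powr (2 + \<epsilon>) \<partial>M) \<le> 1"
  shows "\<forall>k\<ge>2. 3 * measure M (Ablock M X \<mu> m \<delta> k) / gblock \<alpha> m \<mu> k \<le> 1"
proof (intro allI impI)
  interpret prob_space M by fact
  fix k :: nat assume k: "k \<ge> 2"
  define a where "a = real (nk (k - 1))"
  define E where "E = (\<integral>\<omega>. (max (X 0 \<omega>) 0) powr (2 + \<epsilon>) \<partial>M)"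
  define K where "K = (\<alpha> - 1) * \<mu> * (m + 1) powr (\<alpha> - 1) / 2 powr \<alpha>"
  define D where "D = (m + \<mu> * a) powr \<alpha>"
  have [measurable]: "X j \<in> borel_measurable M" for j
    using indep unfolding indep_vars_def by auto
  have a_pos: "a > 0"
    unfolding a_def using nk_ge_1[of "k - 1"] by simp
  then have D_pos: "D > 0"
    unfolding D_def using mu m by (smt (verit) mult_pos_pos powr_gt_zero)
  have K_pos: "K > 0"
    unfolding K_def using alpha mu m by simp
  have "6 * E \<le> K"
    using cond mu m alpha unfolding K_def E_def by (simp add: field_simps)
  have "3 * prob (Ablock M X \<mu> m \<delta> k) \<le> 3 * (a * E / D)"
    unfolding a_def E_def D_def using eps mu m alpha ident integrable_max_0_powr[OF mom]
    by (intro mult_left_mono prob_Ablock_le k) auto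
  also have "\<dots> \<le> a * K / D"
    using \<open>6 * E \<le> K\<close> K_pos a_pos D_pos by (simp add: field_simps)
  also have g_lower: "\<dots> \<le> gblock \<alpha> m \<mu> k"
    using gblock_lower_bound[OF _ mu m k] alpha unfolding K_def D_def a_def by (simp add: field_simps)
  finally have "3 * prob (Ablock M X \<mu> m \<delta> k) \<le> gblock \<alpha> m \<mu> k" .
  moreover have "gblock \<alpha> m \<mu> k > 0"
    using g_lower a_pos D_pos K_pos by (smt (verit) divide_pos_pos mult_pos_pos)
  ultimately show "3 * measure M (Ablock M X \<mu> m \<delta> k) / gblock \<alpha> m \<mu> k \<le> 1"
    by simp
qed

end
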